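(* Let $p$ be a prime, $e\ge1$, and $G$ a finite abelian group of order $p^e$. Let $\psi^p\colon\mathbf{Z}[G]\to\mathbf{Z}[G]$ be the ring homomorphism with $\psi^p(g)=g^p$. If $\rho$ is a chosen representative of level $k>0$, then $$\psi^p(b_\rho)=\sum_{\tau:\ \psi\tau=\rho}p\,b_\tau,$$ where the sum runs over the chosen representatives $\tau$ with $\psi\tau=\rho$ (equivalently, over the equivalence classes of representations $\tau$ with $\psi\tau=\rho$).
   Context: A representation is a group homomorphism $\rho\colon G\to\mathbf{C}^*$; its level is $k$ if $\rho(G)$ has $p^k$ elements. Two representations are equivalent if they have the same kernel. For a representation $\tau$ of level $k>0$, $\psi\tau$ is the representation $x\mapsto\tau(x^p)$ (of level $k-1$). A representative is chosen in each equivalence class in such a way that, for chosen representatives $\tau,\rho$, if $\psi\tau$ is equivalent to $\rho$ then $\psi\tau=\rho$ (such a choice exists). Write $\omega=\exp(2\pi i/p)$. For $\rho$ of level $k>0$ set $b_\rho=\sum_{x\in G,\ \rho(x)=1}x-\sum_{\xi\in G,\ \rho(\xi)=\omega}\xi\in\mathbf{Z}[G]$. *)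

theory Defs
  imports "HOL-Algebra.Group" "HOL-Computational_Algebra.Primes" Complex_Main
begin

text \<open>One-dimensional complex representations (characters) of G, as functions on the carrier
  (extensional, i.e. undefined outside the carrier).\<close>
definition rep :: "('a, 'b) monoid_scheme \<Rightarrow> ('a \<Rightarrow> complex) \<Rightarrow> bool" where
  "rep G \<rho> \<longleftrightarrow> \<rho> \<in> extensional (carrier G) \<and>
     (\<forall>x\<in>carrier G. \<rho> x \<noteq> 0) \<and>
     (\<forall>x\<in>carrier G. \<forall>y\<in>carrier G. \<rho> (x \<otimes>\<^bsub>G\<^esub> y) = \<rho> x * \<rho> y)"

definition level :: "('a, 'b) monoid_scheme \<Rightarrow> nat \<Rightarrow> ('a \<Rightarrow> complex) \<Rightarrow> nat" where
  "level G p \<rho> = (THE k. card (\<rho> ` carrier G) = p ^ k)"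

definition rker :: "('a, 'b) monoid_scheme \<Rightarrow> ('a \<Rightarrow> complex) \<Rightarrow> 'a set" where
  "rker G \<rho> = {x \<in> carrier G. \<rho> x = 1}"

definition rep_equiv :: "('a, 'b) monoid_scheme \<Rightarrow> ('a \<Rightarrow> complex) \<Rightarrow> ('a \<Rightarrow> complex) \<Rightarrow> bool" where
  "rep_equiv G \<rho> \<sigma> \<longleftrightarrow> rker G \<rho> = rker G \<sigma>"

definition psi_rep :: "('a, 'b) monoid_scheme \<Rightarrow> nat \<Rightarrow> ('a \<Rightarrow> complex) \<Rightarrow> ('a \<Rightarrow> complex)" where
  "psi_rep G p \<tau> = restrict (\<lambda>x. \<tau> (x [^]\<^bsub>G\<^esub> p)) (carrier G)"

definition chosen_reps :: "('a, 'b) monoid_scheme \<Rightarrow> nat \<Rightarrow> ('a \<Rightarrow> complex) set \<Rightarrow> bool" where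
  "chosen_reps G p R \<longleftrightarrow>
     R \<subseteq> {\<rho>. rep G \<rho>} \<and>
     (\<forall>\<sigma>. rep G \<sigma> \<longrightarrow> (\<exists>!\<tau>. \<tau> \<in> R \<and> rep_equiv G \<tau> \<sigma>)) \<and>
     (\<forall>\<tau>\<in>R. \<forall>\<rho>\<in>R. level G p \<tau> > 0 \<longrightarrow> rep_equiv G (psi_rep G p \<tau>) \<rho> \<longrightarrow> psi_rep G p \<tau> = \<rho>)"

text \<open>Elements of Z[G] are integer-valued functions on G supported on the carrier.\<close>
definition omega :: "nat \<Rightarrow> complex" where
  "omega p = exp (2 * pi * \<i> / of_nat p)"

definition b_elt :: "('a, 'b) monoid_scheme \<Rightarrow> nat \<Rightarrow> ('a \<Rightarrow> complex) \<Rightarrow> ('a \<Rightarrow> int)" where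
  "b_elt G p \<rho> = (\<lambda>x. if x \<in> carrier G then
      (if \<rho> x = 1 then 1 else 0) - (if \<rho> x = omega p then 1 else 0) else 0)"

text \<open>The ring endomorphism psi^p of Z[G], g \<mapsto> g^p, extended linearly.\<close>
definition psi_grp :: "('a, 'b) monoid_scheme \<Rightarrow> nat \<Rightarrow> ('a \<Rightarrow> int) \<Rightarrow> ('a \<Rightarrow> int)" where
  "psi_grp G p f = (\<lambda>h. \<Sum>g\<in>{g \<in> carrier G. g [^]\<^bsub>G\<^esub> p = h}. f g)"

end

theory Submission
  imports Defs "HOL-Algebra.Multiplicative_Group"
begin

text \<open>Write \<open>\<Lambda>\<close> for the set of all characters
  \<open>\<tau>\<close> with \<open>\<psi>\<tau> = \<rho>\<close>. First, \<open>\<psi>\<^sup>p(b\<^sub>\<rho>)(h) = \<Sum>\<^sub>\<tau>\<^sub>\<in>\<^sub>\<Lambda> b\<^sub>\<tau>(h)\<close>. If \<open>\<rho>\<close> is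
  nontrivial on the \<open>p\<close>-torsion \<open>G[p]\<close>, then \<open>\<Lambda> = {}\<close> and translating by a torsion element
  with \<open>\<rho>\<close>-value \<open>\<omega>\<close> shows that the left side vanishes. Otherwise \<open>\<rho>\<close> factors through
  \<open>x \<mapsto> x\<^sup>p\<close>, so \<open>\<Lambda>\<close> is the set of extensions to \<open>G\<close> of a character of \<open>G\<^sup>p\<close>; counting
  extensions of characters one generator at a time gives \<open>|\<Lambda>| = |G : G\<^sup>p| = |G[p]|\<close>, which
  settles \<open>h \<in> G\<^sup>p\<close>, while for \<open>h \<notin> G\<^sup>p\<close> multiplying by a character trivial on \<open>G\<^sup>p\<close> with
  value \<open>\<omega>\<close> at \<open>h\<close> makes both sides vanish.

  Second, \<open>\<Lambda>\<close> splits into kernel classes on which \<open>b\<^sub>\<tau>\<close> is constant. The class of \<open>t\<close> is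
  in bijection with the characters trivial on \<open>t\<^sup>-\<^sup>1(\<rho>(G))\<close>, a subgroup of index \<open>p\<close>, so it has
  exactly \<open>p\<close> elements; and by the compatibility of the choice with \<open>\<psi>\<close> its chosen representative
  again lies in \<open>\<Lambda>\<close>.\<close>

section \<open>Roots of unity and counting\<close>

lemma card_eq_mult_card_image:
  assumes "finite A" and "\<And>y. y \<in> f ` A \<Longrightarrow> card {x\<in>A. f x = y} = m"
  shows "card A = m * card (f ` A)"
proof -
  have "card A = (\<Sum>y\<in>f ` A. card {x\<in>A. f x = y})"
    using sum.image_gen[OF assms(1), of "\<lambda>_. 1::nat" f] by simp
  also have "\<dots> = (\<Sum>y\<in>f ` A. m)" using assms(2) by simp
  finally show ?thesis by simp
qed

lemma root_of_unity_eq_1_if_coprime: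
  fixes w :: complex
  assumes "w ^ d = 1" "w ^ q = 1" "coprime d q" "d \<noteq> 0"
  shows "w = 1"
proof -
  obtain x y where xy: "d * x = q * y + gcd d q" using bezout_nat[OF assms(4)] by blast
  have "w ^ (d * x) = w ^ (q * y) * w" using xy assms(3) by (simp add: power_add)
  then show ?thesis using assms(1,2) by (simp add: power_mult)
qed

lemma prime_root_of_unity_powers:
  fixes w u :: complex
  assumes p: "prime p" and w: "w ^ p = 1" "w \<noteq> 1" and u: "u ^ p = 1"
  shows "\<exists>i. u = w ^ i"
proof -
  have p0: "p > 0" using p prime_gt_0_nat by blast
  have w0: "w \<noteq> 0" using w p0 by (metis power_0_left zero_neq_one neq0_conv)
  have less: "w ^ i \<noteq> w ^ j" if "i < j" "j < p" for i j
  proof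
    assume eq: "w ^ i = w ^ j"
    have "w ^ i * w ^ (j - i) = w ^ j" using that(1) by (simp flip: power_add)
    then have "w ^ i * w ^ (j - i) = w ^ i * 1" using eq by simp
    then have "w ^ (j - i) = 1" using w0 by simp
    moreover have "\<not> p dvd j - i" using that by (auto dest: dvd_imp_le)
    then have "coprime (j - i) p" using prime_imp_coprime[OF p] coprime_commute by blast
    ultimately show False using root_of_unity_eq_1_if_coprime[of w "j - i" p] w that(1) by simp
  qed
  have inj: "inj_on (\<lambda>i. w ^ i) {..<p}"
    by (rule inj_onI) (metis lessThan_iff less linorder_neqE_nat)
  have "(\<lambda>i. w ^ i) ` {..<p} \<subseteq> {z. z ^ p = 1}"
    using w by (auto simp flip: power_mult simp: mult.commute[of _ p] power_mult)
  moreover have "card ((\<lambda>i. w ^ i) ` {..<p}) = card {z::complex. z ^ p = 1}"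
    using card_image[OF inj] card_roots_unity_eq[OF p0] by simp
  ultimately have "(\<lambda>i. w ^ i) ` {..<p} = {z. z ^ p = 1}"
    by (intro card_subset_eq) (auto simp: finite_roots_unity p0)
  then show ?thesis using u by blast
qed

lemma omega_pow_eq_1: assumes "p > 0" shows "omega p ^ p = 1"
proof -
  have "omega p ^ p = exp (of_nat p * (2 * pi * \<i> / of_nat p))"
    unfolding omega_def by (rule exp_of_nat_mult[symmetric])
  also have "of_nat p * (2 * pi * \<i> / of_nat p) = 2 * of_real pi * \<i>" using assms by simp
  finally show ?thesis by simp
qed

section \<open>Characters of subgroups\<close>

definition subgroup_char :: "('a, 'b) monoid_scheme \<Rightarrow> 'a set \<Rightarrow> ('a \<Rightarrow> complex) \<Rightarrow> bool" where
  "subgroup_char G H \<chi> \<longleftrightarrow> \<chi> \<in> extensional H \<and> (\<forall>x\<in>H. \<chi> x \<noteq> 0) \<and>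
     (\<forall>x\<in>H. \<forall>y\<in>H. \<chi> (x \<otimes>\<^bsub>G\<^esub> y) = \<chi> x * \<chi> y)"

definition char_extensions :: "('a, 'b) monoid_scheme \<Rightarrow> 'a set \<Rightarrow> ('a \<Rightarrow> complex) \<Rightarrow> ('a \<Rightarrow> complex) set" where
  "char_extensions G H \<chi> = {\<tau>. rep G \<tau> \<and> (\<forall>x\<in>H. \<tau> x = \<chi> x)}"

lemma rep_iff_subgroup_char: "rep G \<tau> \<longleftrightarrow> subgroup_char G (carrier G) \<tau>"
  by (simp add: rep_def subgroup_char_def)

context comm_group
begin

lemma subgroup_pow_closed: "subgroup H G \<Longrightarrow> x \<in> H \<Longrightarrow> x [^] (n::nat) \<in> H"
  by (induction n) (auto simp: subgroup.m_closed subgroup.one_closed)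

lemma subgroup_char_mult:
  "subgroup_char G H \<chi> \<Longrightarrow> x \<in> H \<Longrightarrow> y \<in> H \<Longrightarrow> \<chi> (x \<otimes> y) = \<chi> x * \<chi> y"
  by (auto simp: subgroup_char_def)

lemma subgroup_char_nonzero: "subgroup_char G H \<chi> \<Longrightarrow> x \<in> H \<Longrightarrow> \<chi> x \<noteq> 0"
  by (auto simp: subgroup_char_def)

lemma subgroup_char_one:
  assumes "subgroup H G" "subgroup_char G H \<chi>"
  shows "\<chi> \<one> = 1"
proof -
  have "\<one> \<in> H" using assms(1) by (rule subgroup.one_closed)
  then have "\<chi> \<one> * \<chi> \<one> = \<chi> \<one> * 1" "\<chi> \<one> \<noteq> 0"
    using subgroup_char_mult[OF assms(2), of \<one> \<one>] subgroup_char_nonzero[OF assms(2)] by auto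
  then show ?thesis by (metis mult_left_cancel)
qed

lemma subgroup_char_pow:
  assumes "subgroup H G" "subgroup_char G H \<chi>" "x \<in> H"
  shows "\<chi> (x [^] (n::nat)) = \<chi> x ^ n"
proof (induction n)
  case 0
  then show ?case using subgroup_char_one[OF assms(1,2)] by simp
next
  case (Suc n)
  have "\<chi> (x [^] Suc n) = \<chi> (x [^] n) * \<chi> x"
    using subgroup_char_mult[OF assms(2) subgroup_pow_closed[OF assms(1,3)] assms(3)] by simp
  then show ?case using Suc by simp
qed

lemma subgroup_char_inv:
  assumes "subgroup H G" "subgroup_char G H \<chi>" "x \<in> H"
  shows "\<chi> (inv x) = inverse (\<chi> x)"
proof -
  have "inv x \<in> H" "x \<in> carrier G"
    using assms(1,3) by (auto simp: subgroup.m_inv_closed subgroup.mem_carrier)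
  then have "\<chi> x * \<chi> (inv x) = 1"
    using subgroup_char_mult[OF assms(2,3)] subgroup_char_one[OF assms(1,2)] by (metis r_inv)
  then show ?thesis by (metis inverse_unique)
qed

lemma rep_mult: "rep G \<tau> \<Longrightarrow> x \<in> carrier G \<Longrightarrow> y \<in> carrier G \<Longrightarrow> \<tau> (x \<otimes> y) = \<tau> x * \<tau> y"
  by (simp add: rep_def)

lemma rep_nonzero: "rep G \<tau> \<Longrightarrow> x \<in> carrier G \<Longrightarrow> \<tau> x \<noteq> 0"
  by (simp add: rep_def)

lemma rep_outside: "rep G \<tau> \<Longrightarrow> x \<notin> carrier G \<Longrightarrow> \<tau> x = undefined"
  by (simp add: rep_def extensional_def)

lemma rep_one: "rep G \<tau> \<Longrightarrow> \<tau> \<one> = 1"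
  using subgroup_char_one[OF subgroup_self] by (simp add: rep_iff_subgroup_char)

lemma rep_pow: "rep G \<tau> \<Longrightarrow> x \<in> carrier G \<Longrightarrow> \<tau> (x [^] (n::nat)) = \<tau> x ^ n"
  using subgroup_char_pow[OF subgroup_self] by (simp add: rep_iff_subgroup_char)

lemma rep_inv: "rep G \<tau> \<Longrightarrow> x \<in> carrier G \<Longrightarrow> \<tau> (inv x) = inverse (\<tau> x)"
  using subgroup_char_inv[OF subgroup_self] by (simp add: rep_iff_subgroup_char)

lemma rep_times:
  "rep G \<tau> \<Longrightarrow> rep G \<sigma> \<Longrightarrow> rep G (restrict (\<lambda>x. \<tau> x * \<sigma> x) (carrier G))"
  by (auto simp: rep_def)

lemma rep_divide:
  "rep G \<tau> \<Longrightarrow> rep G \<sigma> \<Longrightarrow> rep G (restrict (\<lambda>x. \<tau> x / \<sigma> x) (carrier G))"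
  by (auto simp: rep_def)

lemma rep_times_divide_cancel:
  assumes "rep G \<tau>" "rep G \<sigma>"
  shows "restrict (\<lambda>x. restrict (\<lambda>x. \<tau> x * \<sigma> x) (carrier G) x / \<sigma> x) (carrier G) = \<tau>"
proof
  fix x show "restrict (\<lambda>x. restrict (\<lambda>x. \<tau> x * \<sigma> x) (carrier G) x / \<sigma> x) (carrier G) x = \<tau> x"
    using assms rep_nonzero[OF assms(2)] rep_outside[OF assms(1)] by (cases "x \<in> carrier G") auto
qed

lemma rep_divide_times_cancel:
  assumes "rep G \<tau>" "rep G \<sigma>"
  shows "restrict (\<lambda>x. restrict (\<lambda>x. \<tau> x / \<sigma> x) (carrier G) x * \<sigma> x) (carrier G) = \<tau>"
proof
  fix x show "restrict (\<lambda>x. restrict (\<lambda>x. \<tau> x / \<sigma> x) (carrier G) x * \<sigma> x) (carrier G) x = \<tau> x"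
    using assms rep_nonzero[OF assms(2)] rep_outside[OF assms(1)] by (cases "x \<in> carrier G") auto
qed

lemma rep_pow_order: "rep G \<tau> \<Longrightarrow> x \<in> carrier G \<Longrightarrow> \<tau> x ^ order G = 1"
  using rep_pow[of \<tau> x "order G"] rep_one pow_order_eq_1 by metis

lemma finite_reps:
  assumes "finite (carrier G)"
  shows "finite {\<tau>. rep G \<tau>}"
proof -
  have "order G > 0" using assms by (simp add: order_gt_0_iff_finite)
  then have "finite (PiE (carrier G) (\<lambda>_. {z::complex. z ^ order G = 1}))"
    using assms by (intro finite_PiE) (auto intro: finite_roots_unity)
  moreover have "{\<tau>. rep G \<tau>} \<subseteq> PiE (carrier G) (\<lambda>_. {z. z ^ order G = 1})"
    using rep_pow_order by (auto simp: rep_def PiE_def Pi_def)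
  ultimately show ?thesis by (rule finite_subset[rotated])
qed

lemma rep_eq_if_same_kernel:
  assumes "rep G \<sigma>" "rep G \<tau>" "rker G \<tau> = rker G \<sigma>"
    and "x \<in> carrier G" "y \<in> carrier G" "\<sigma> x = \<sigma> y"
  shows "\<tau> x = \<tau> y"
proof -
  have "\<sigma> (x \<otimes> inv y) = 1"
    using assms(1,4-6) by (simp add: rep_mult rep_inv rep_nonzero)
  then have "\<tau> (x \<otimes> inv y) = 1" using assms(3-5) by (auto simp: rker_def)
  then have "\<tau> x * inverse (\<tau> y) = 1" using assms(2,4,5) by (simp add: rep_mult rep_inv)
  then show ?thesis using rep_nonzero[OF assms(2,5)] by (simp add: field_simps)
qed

lemma card_subgroup_eq_card_rker_mult:
  assumes fin: "finite (carrier G)" and \<tau>: "rep G \<tau>" and Q: "subgroup Q G" "rker G \<tau> \<subseteq> Q"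
  shows "card Q = card (rker G \<tau>) * card (\<tau> ` Q)"
proof (rule card_eq_mult_card_image)
  show "finite Q" using fin subgroup.subset[OF Q(1)] finite_subset by blast
  fix v assume "v \<in> \<tau> ` Q"
  then obtain y where y: "y \<in> Q" "v = \<tau> y" by blast
  have yc: "y \<in> carrier G" using y(1) subgroup.mem_carrier[OF Q(1)] by blast
  have "{x\<in>Q. \<tau> x = v} = (\<lambda>k. y \<otimes> k) ` rker G \<tau>"
  proof (intro subset_antisym subsetI)
    fix x assume x: "x \<in> {x\<in>Q. \<tau> x = v}"
    then have xc: "x \<in> carrier G" using subgroup.mem_carrier[OF Q(1)] by blast
    have "\<tau> (inv y \<otimes> x) = 1"
      using x y yc xc \<tau> by (simp add: rep_mult rep_inv rep_nonzero)
    then have "inv y \<otimes> x \<in> rker G \<tau>" using xc yc by (simp add: rker_def)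
    moreover have "x = y \<otimes> (inv y \<otimes> x)" using xc yc by (simp add: m_assoc[symmetric])
    ultimately show "x \<in> (\<lambda>k. y \<otimes> k) ` rker G \<tau>" by blast
  next
    fix x assume "x \<in> (\<lambda>k. y \<otimes> k) ` rker G \<tau>"
    then obtain k where "k \<in> rker G \<tau>" "x = y \<otimes> k" by blast
    then show "x \<in> {x\<in>Q. \<tau> x = v}"
      using y yc Q \<tau> by (auto simp: rker_def rep_mult subgroup.m_closed)
  qed
  moreover have "inj_on (\<lambda>k. y \<otimes> k) (rker G \<tau>)"
    using inj_on_cmult[OF yc] by (rule inj_on_subset) (auto simp: rker_def)
  ultimately show "card {x\<in>Q. \<tau> x = v} = card (rker G \<tau>)" by (simp add: card_image)
qed

lemma card_image_rep_pgroup: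
  assumes "finite (carrier G)" "prime p" "card (carrier G) = p ^ e" "rep G \<tau>"
  shows "card (\<tau> ` carrier G) = p ^ level G p \<tau>"
proof -
  have "card (\<tau> ` carrier G) dvd p ^ e"
    using card_subgroup_eq_card_rker_mult[OF assms(1,4) subgroup_self] assms(3)
    by (simp add: rker_def)
  then obtain j where j: "card (\<tau> ` carrier G) = p ^ j" using divides_primepow_nat[OF assms(2)] by blast
  moreover have "level G p \<tau> = j" unfolding level_def
    using j prime_gt_1_nat[OF assms(2)] by (intro the_equality) auto
  ultimately show ?thesis by simp
qed

lemma level_pos_iff:
  assumes "finite (carrier G)" "prime p" "card (carrier G) = p ^ e" "rep G \<tau>"
  shows "0 < level G p \<tau> \<longleftrightarrow> (\<exists>x\<in>carrier G. \<tau> x \<noteq> 1)"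
proof -
  have card: "card (\<tau> ` carrier G) = p ^ level G p \<tau>" using card_image_rep_pgroup[OF assms] .
  have one: "1 \<in> \<tau> ` carrier G" using rep_one[OF assms(4)] one_closed by force
  have "0 < level G p \<tau> \<longleftrightarrow> card (\<tau> ` carrier G) \<noteq> 1"
    using card prime_gt_1_nat[OF assms(2)] by simp
  also have "\<dots> \<longleftrightarrow> \<tau> ` carrier G \<noteq> {1}"
  proof
    assume "card (\<tau> ` carrier G) \<noteq> 1"
    then show "\<tau> ` carrier G \<noteq> {1}" by auto
  next
    assume "\<tau> ` carrier G \<noteq> {1}"
    then show "card (\<tau> ` carrier G) \<noteq> 1"
      using one by (auto simp: card_1_singleton_iff elim!: equalityE)
  qed
  also have "\<dots> \<longleftrightarrow> (\<exists>x\<in>carrier G. \<tau> x \<noteq> 1)" using one by blast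
  finally show ?thesis .
qed

end

section \<open>Counting extensions of characters\<close>

definition rel_order :: "('a, 'b) monoid_scheme \<Rightarrow> 'a set \<Rightarrow> 'a \<Rightarrow> nat" where
  "rel_order G H g = (LEAST m. 0 < m \<and> g [^]\<^bsub>G\<^esub> m \<in> H)"

definition adjoin :: "('a, 'b) monoid_scheme \<Rightarrow> 'a set \<Rightarrow> 'a \<Rightarrow> 'a set" where
  "adjoin G H g = {a \<otimes>\<^bsub>G\<^esub> g [^]\<^bsub>G\<^esub> (i::nat) | a i. a \<in> H}"

text \<open>The extension of \<open>\<chi>\<close> from \<open>H\<close> to \<open>adjoin G H g\<close> with \<open>g \<mapsto> c\<close>; it is well defined
  when \<open>c ^ m = \<chi> (g ^ m)\<close> for \<open>m = rel_order G H g\<close>.\<close>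
definition adjoin_char ::
    "('a, 'b) monoid_scheme \<Rightarrow> 'a set \<Rightarrow> 'a \<Rightarrow> ('a \<Rightarrow> complex) \<Rightarrow> complex \<Rightarrow> 'a \<Rightarrow> complex" where
  "adjoin_char G H g \<chi> c = (\<lambda>y. if y \<in> adjoin G H g then
     (SOME v. \<exists>a\<in>H. \<exists>i::nat. y = a \<otimes>\<^bsub>G\<^esub> g [^]\<^bsub>G\<^esub> i \<and> v = \<chi> a * c ^ i) else undefined)"

definition annihilator :: "('a, 'b) monoid_scheme \<Rightarrow> 'a set \<Rightarrow> ('a \<Rightarrow> complex) set" where
  "annihilator G H = {\<phi>. rep G \<phi> \<and> (\<forall>x\<in>H. \<phi> x = 1)}"

context comm_group
begin

lemma rel_order:
  assumes "finite (carrier G)" "subgroup H G" "g \<in> carrier G"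
  shows "0 < rel_order G H g" "g [^] rel_order G H g \<in> H"
proof -
  have "0 < order G \<and> g [^] order G \<in> H"
    using assms pow_order_eq_1 subgroup.one_closed by (simp add: order_gt_0_iff_finite)
  then have "0 < rel_order G H g \<and> g [^] rel_order G H g \<in> H"
    unfolding rel_order_def by (rule LeastI)
  then show "0 < rel_order G H g" "g [^] rel_order G H g \<in> H" by auto
qed

lemma rel_order_dvd:
  assumes "finite (carrier G)" "subgroup H G" "g \<in> carrier G" "g [^] (d::nat) \<in> H"
  shows "rel_order G H g dvd d"
proof (rule ccontr)
  assume nd: "\<not> rel_order G H g dvd d"
  define m where "m = rel_order G H g"
  have m: "0 < m" "g [^] m \<in> H" using rel_order[OF assms(1-3)] by (auto simp: m_def)
  define u where "u = (g [^] m) [^] (d div m)"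
  have uH: "u \<in> H" unfolding u_def using subgroup_pow_closed[OF assms(2) m(2)] .
  then have uc: "u \<in> carrier G" using subgroup.mem_carrier[OF assms(2)] by blast
  have "g [^] d = g [^] (m * (d div m)) \<otimes> g [^] (d mod m)"
    using assms(3) by (simp add: nat_pow_mult)
  then have "g [^] d = u \<otimes> g [^] (d mod m)" using assms(3) by (simp add: u_def nat_pow_pow)
  then have "g [^] (d mod m) = inv u \<otimes> g [^] d"
    using uc assms(3) by (simp add: inv_solve_left)
  then have "g [^] (d mod m) \<in> H"
    using uH assms(2,4) by (simp add: subgroup.m_closed subgroup.m_inv_closed)
  moreover have "0 < d mod m" "d mod m < m" using nd m(1) unfolding m_def by (auto simp: dvd_eq_mod_eq_0)
  ultimately show False
    using not_less_Least[of "d mod m" "\<lambda>m. 0 < m \<and> g [^] m \<in> H"] unfolding m_def rel_order_def by blast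
qed

lemma subset_adjoin: "subgroup H G \<Longrightarrow> H \<subseteq> adjoin G H g"
  unfolding adjoin_def by (force dest: subgroup.mem_carrier intro: exI[of _ 0])

lemma gen_in_adjoin: "subgroup H G \<Longrightarrow> g \<in> carrier G \<Longrightarrow> g \<in> adjoin G H g"
  unfolding adjoin_def
  by (auto intro!: exI[of _ \<one>] exI[of _ "1::nat"] dest: subgroup.one_closed)

lemma adjoin_subgroup:
  assumes "finite (carrier G)" "subgroup H G" "g \<in> carrier G"
  shows "subgroup (adjoin G H g) G"
proof (rule subgroupI)
  have hc: "\<And>a. a \<in> H \<Longrightarrow> a \<in> carrier G" using subgroup.mem_carrier[OF assms(2)] by blast
  show "adjoin G H g \<subseteq> carrier G" unfolding adjoin_def using assms(3) hc by auto
  show "adjoin G H g \<noteq> {}" using gen_in_adjoin[OF assms(2,3)] by blast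
  fix a b assume a: "a \<in> adjoin G H g" and b: "b \<in> adjoin G H g"
  obtain a1 i where a1: "a1 \<in> H" "a = a1 \<otimes> g [^] (i::nat)" using a unfolding adjoin_def by blast
  obtain b1 j where b1: "b1 \<in> H" "b = b1 \<otimes> g [^] (j::nat)" using b unfolding adjoin_def by blast
  have "a \<otimes> b = (a1 \<otimes> b1) \<otimes> g [^] (i + j)"
    using a1 b1 hc assms(3) by (simp add: m_ac nat_pow_mult[symmetric])
  then show "a \<otimes> b \<in> adjoin G H g"
    unfolding adjoin_def using a1 b1 assms(2) by (blast intro: subgroup.m_closed)
  have "inv (g [^] i) = g [^] (i * (order G - 1))"
  proof (rule inv_equality)
    have "order G > 0" using assms(1) by (simp add: order_gt_0_iff_finite)
    then have "g [^] (i * (order G - 1)) \<otimes> g [^] i = g [^] (order G * i)"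
      using assms(3) by (simp add: nat_pow_mult algebra_simps)
    then have "g [^] (i * (order G - 1)) \<otimes> g [^] i = (g [^] order G) [^] i"
      using assms(3) by (simp add: nat_pow_pow)
    then show "g [^] (i * (order G - 1)) \<otimes> g [^] i = \<one>" using pow_order_eq_1[OF assms(3)] by simp
  qed (use assms(3) in auto)
  then have "inv a = inv a1 \<otimes> g [^] (i * (order G - 1))"
    using a1 hc assms(3) by (simp add: inv_mult)
  then show "inv a \<in> adjoin G H g"
    unfolding adjoin_def using a1 assms(2) by (blast intro: subgroup.m_inv_closed)
qed

lemma adjoin_eq_cases:
  assumes "finite (carrier G)" "subgroup H G" "g \<in> carrier G"
    and "a \<in> H" "b \<in> H" "a \<otimes> g [^] (i::nat) = b \<otimes> g [^] (j::nat)" "i \<le> j"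
  shows "\<exists>q. j - i = rel_order G H g * q \<and> a = b \<otimes> (g [^] rel_order G H g) [^] q"
proof -
  have ac: "a \<in> carrier G" "b \<in> carrier G" using assms(4,5) subgroup.mem_carrier[OF assms(2)] by auto
  have "g [^] j = g [^] (j - i) \<otimes> g [^] i" using assms(3,7) by (simp add: nat_pow_mult)
  then have "a \<otimes> g [^] i = (b \<otimes> g [^] (j - i)) \<otimes> g [^] i"
    using assms(3,6) ac by (simp add: m_assoc)
  then have e: "a = b \<otimes> g [^] (j - i)" using ac assms(3) by simp
  then have "g [^] (j - i) = inv b \<otimes> a" using ac assms(3) by (simp add: inv_solve_left)
  then have "g [^] (j - i) \<in> H"
    using assms(2,4,5) by (simp add: subgroup.m_closed subgroup.m_inv_closed)
  then obtain q where q: "j - i = rel_order G H g * q" using rel_order_dvd[OF assms(1-3)] by blast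
  then show ?thesis using e assms(3) by (auto simp: nat_pow_pow)
qed

lemma inj_on_adjoin_repr:
  assumes "finite (carrier G)" "subgroup H G" "g \<in> carrier G"
  shows "inj_on (\<lambda>(a, i). a \<otimes> g [^] i) (H \<times> {..<rel_order G H g})"
proof (rule inj_onI, clarify)
  have le: "i = j \<and> a = b"
    if ab: "a \<in> H" "b \<in> H" and j: "j < rel_order G H g"
      and eq: "a \<otimes> g [^] i = b \<otimes> g [^] j" and ij: "i \<le> j" for a b i j
  proof -
    obtain q where q: "j - i = rel_order G H g * q" "a = b \<otimes> (g [^] rel_order G H g) [^] q"
      using adjoin_eq_cases[OF assms ab eq ij] by blast
    moreover have "q = 0" using q(1) j by (cases q) auto
    ultimately show ?thesis using ab ij subgroup.mem_carrier[OF assms(2)] by simp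
  qed
  fix a i b j assume "a \<in> H" "i < rel_order G H g" "b \<in> H" "j < rel_order G H g"
    "a \<otimes> g [^] i = b \<otimes> g [^] j"
  then show "a = b \<and> i = j" using le[of a b j i] le[of b a i j] by (cases "i \<le> j") auto
qed

lemma adjoin_eq_image:
  assumes "finite (carrier G)" "subgroup H G" "g \<in> carrier G"
  shows "adjoin G H g = (\<lambda>(a, i). a \<otimes> g [^] i) ` (H \<times> {..<rel_order G H g})"
proof (intro subset_antisym subsetI)
  fix y assume "y \<in> adjoin G H g"
  then obtain a i where a: "a \<in> H" "y = a \<otimes> g [^] (i::nat)" unfolding adjoin_def by blast
  define m where "m = rel_order G H g"
  have m: "0 < m" "g [^] m \<in> H" using rel_order[OF assms] by (auto simp: m_def)
  define a' where "a' = a \<otimes> (g [^] m) [^] (i div m)"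
  have "a' \<in> H" unfolding a'_def
    using a(1) subgroup_pow_closed[OF assms(2) m(2)] assms(2) by (simp add: subgroup.m_closed)
  moreover have "g [^] i = g [^] (m * (i div m)) \<otimes> g [^] (i mod m)"
    using assms(3) by (simp add: nat_pow_mult)
  then have "y = a' \<otimes> g [^] (i mod m)"
    unfolding a'_def using a subgroup.mem_carrier[OF assms(2)] assms(3) by (simp add: m_assoc nat_pow_pow)
  ultimately show "y \<in> (\<lambda>(a, i). a \<otimes> g [^] i) ` (H \<times> {..<rel_order G H g})"
    using m(1) unfolding m_def by force
qed (auto simp: adjoin_def)

lemma card_adjoin:
  assumes "finite (carrier G)" "subgroup H G" "g \<in> carrier G"
  shows "card (adjoin G H g) = rel_order G H g * card H"
  using card_image[OF inj_on_adjoin_repr[OF assms]] adjoin_eq_image[OF assms]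
  by (simp add: card_cartesian_product)

context
  fixes H g \<chi> c
  assumes fin: "finite (carrier G)" and H: "subgroup H G" and g: "g \<in> carrier G"
    and \<chi>: "subgroup_char G H \<chi>" and c: "c ^ rel_order G H g = \<chi> (g [^] rel_order G H g)"
begin

lemma adjoin_char_well_defined:
  assumes "a \<in> H" "b \<in> H" "a \<otimes> g [^] (i::nat) = b \<otimes> g [^] (j::nat)"
  shows "\<chi> a * c ^ i = \<chi> b * c ^ j"
proof -
  define m where "m = rel_order G H g"
  have m: "g [^] m \<in> H" using rel_order[OF fin H g] by (auto simp: m_def)
  have le: "\<chi> a' * c ^ i' = \<chi> b' * c ^ j'"
    if ab: "a' \<in> H" "b' \<in> H" and eq: "a' \<otimes> g [^] i' = b' \<otimes> g [^] j'" and ij: "i' \<le> j'"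
    for a' b' i' j'
  proof -
    obtain q where q: "j' - i' = m * q" "a' = b' \<otimes> (g [^] m) [^] q"
      using adjoin_eq_cases[OF fin H g ab eq ij] unfolding m_def by blast
    have "\<chi> a' = \<chi> b' * \<chi> (g [^] m) ^ q"
      using q(2) subgroup_char_mult[OF \<chi> ab(2) subgroup_pow_closed[OF H m]]
        subgroup_char_pow[OF H \<chi> m] by simp
    also have "\<dots> = \<chi> b' * c ^ (j' - i')" using c q(1) by (simp add: m_def power_mult)
    finally show ?thesis using ij by (simp add: mult.assoc flip: power_add)
  qed
  show ?thesis using le[OF assms] le[OF assms(2,1) assms(3)[symmetric]] by (cases "i \<le> j") auto
qed

lemma adjoin_char_apply:
  assumes a: "a \<in> H"
  shows "adjoin_char G H g \<chi> c (a \<otimes> g [^] (i::nat)) = \<chi> a * c ^ i"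
proof -
  let ?P = "\<lambda>v. \<exists>a'\<in>H. \<exists>i'::nat. a \<otimes> g [^] i = a' \<otimes> g [^] i' \<and> v = \<chi> a' * c ^ i'"
  have "?P (\<chi> a * c ^ i)" using a by blast
  then have "?P (SOME v. ?P v)" by (rule someI)
  then have "(SOME v. ?P v) = \<chi> a * c ^ i" using adjoin_char_well_defined a by metis
  moreover have "a \<otimes> g [^] i \<in> adjoin G H g" unfolding adjoin_def using a by blast
  ultimately show ?thesis unfolding adjoin_char_def by simp
qed

lemma adjoin_char_restrict: "x \<in> H \<Longrightarrow> adjoin_char G H g \<chi> c x = \<chi> x"
  using adjoin_char_apply[of x 0] subgroup.mem_carrier[OF H] by simp

lemma adjoin_char_gen: "adjoin_char G H g \<chi> c g = c"
  using adjoin_char_apply[OF subgroup.one_closed[OF H], of 1] subgroup_char_one[OF H \<chi>] g by simp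

lemma subgroup_char_adjoin_char: "subgroup_char G (adjoin G H g) (adjoin_char G H g \<chi> c)"
  unfolding subgroup_char_def
proof (intro conjI ballI)
  have hc: "\<And>a. a \<in> H \<Longrightarrow> a \<in> carrier G" using subgroup.mem_carrier[OF H] by blast
  have "\<chi> (g [^] rel_order G H g) \<noteq> 0" using subgroup_char_nonzero[OF \<chi>] rel_order[OF fin H g] by simp
  then have "c ^ rel_order G H g \<noteq> 0" using c by simp
  then have "c \<noteq> 0" using rel_order(1)[OF fin H g] by auto
  show "adjoin_char G H g \<chi> c \<in> extensional (adjoin G H g)"
    unfolding adjoin_char_def extensional_def by simp
  fix y assume "y \<in> adjoin G H g"
  then obtain a i where a: "a \<in> H" "y = a \<otimes> g [^] (i::nat)" unfolding adjoin_def by blast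
  show "adjoin_char G H g \<chi> c y \<noteq> 0"
    using adjoin_char_apply[OF a(1)] a subgroup_char_nonzero[OF \<chi> a(1)] \<open>c \<noteq> 0\<close> by simp
  fix z assume "z \<in> adjoin G H g"
  then obtain b j where b: "b \<in> H" "z = b \<otimes> g [^] (j::nat)" unfolding adjoin_def by blast
  have ab: "a \<otimes> b \<in> H" using a b H by (simp add: subgroup.m_closed)
  have "y \<otimes> z = (a \<otimes> b) \<otimes> g [^] (i + j)"
    using a b hc g by (simp add: m_ac nat_pow_mult[symmetric])
  then show "adjoin_char G H g \<chi> c (y \<otimes> z) = adjoin_char G H g \<chi> c y * adjoin_char G H g \<chi> c z"
    using adjoin_char_apply[OF ab] adjoin_char_apply[OF a(1)] adjoin_char_apply[OF b(1)] a b
      subgroup_char_mult[OF \<chi> a(1) b(1)] by (simp add: power_add)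
qed

end

lemma char_extensions_carrier:
  "subgroup_char G (carrier G) \<chi> \<Longrightarrow> char_extensions G (carrier G) \<chi> = {\<chi>}"
  by (auto simp: char_extensions_def rep_iff_subgroup_char subgroup_char_def
      intro: extensionalityI)

lemma char_extensions_eq_UN_adjoin:
  assumes fin: "finite (carrier G)" and H: "subgroup H G" and g: "g \<in> carrier G"
    and \<chi>: "subgroup_char G H \<chi>"
  shows "char_extensions G H \<chi> = (\<Union>c\<in>{c. c ^ rel_order G H g = \<chi> (g [^] rel_order G H g)}.
           char_extensions G (adjoin G H g) (adjoin_char G H g \<chi> c))"
    (is "_ = (\<Union>c\<in>?C. _)")
proof (intro subset_antisym subsetI)
  fix \<tau> assume "\<tau> \<in> char_extensions G H \<chi>"
  then have \<tau>: "rep G \<tau>" "\<forall>x\<in>H. \<tau> x = \<chi> x" unfolding char_extensions_def by auto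
  have "\<tau> g \<in> ?C" using \<tau> rep_pow[OF \<tau>(1) g] rel_order[OF fin H g] by auto
  moreover have "\<tau> y = adjoin_char G H g \<chi> (\<tau> g) y" if y: "y \<in> adjoin G H g" for y
  proof -
    obtain a i where a: "a \<in> H" "y = a \<otimes> g [^] (i::nat)" using y unfolding adjoin_def by blast
    then have "\<tau> y = \<chi> a * \<tau> g ^ i"
      using \<tau> g subgroup.mem_carrier[OF H] by (simp add: rep_mult rep_pow)
    also have "\<dots> = adjoin_char G H g \<chi> (\<tau> g) y"
      using adjoin_char_apply[OF fin H g \<chi> _ a(1)] \<open>\<tau> g \<in> ?C\<close> a(2) by simp
    finally show ?thesis .
  qed
  ultimately show "\<tau> \<in> (\<Union>c\<in>?C. char_extensions G (adjoin G H g) (adjoin_char G H g \<chi> c))"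
    using \<tau>(1) unfolding char_extensions_def by blast
next
  fix \<tau> assume "\<tau> \<in> (\<Union>c\<in>?C. char_extensions G (adjoin G H g) (adjoin_char G H g \<chi> c))"
  then show "\<tau> \<in> char_extensions G H \<chi>"
    using adjoin_char_restrict[OF fin H g \<chi>] subset_adjoin[OF H]
    unfolding char_extensions_def by fastforce
qed

lemma card_char_extensions_eq_sum_adjoin:
  assumes fin: "finite (carrier G)" and H: "subgroup H G" and g: "g \<in> carrier G"
    and \<chi>: "subgroup_char G H \<chi>"
  shows "card (char_extensions G H \<chi>) = (\<Sum>c\<in>{c. c ^ rel_order G H g = \<chi> (g [^] rel_order G H g)}.
           card (char_extensions G (adjoin G H g) (adjoin_char G H g \<chi> c)))"
  unfolding char_extensions_eq_UN_adjoin[OF assms]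
proof (intro card_UN_disjoint ballI impI)
  show "finite {c. c ^ rel_order G H g = \<chi> (g [^] rel_order G H g)}"
    using rel_order(1)[OF fin H g] by (rule finite_nth_roots)
  show "finite (char_extensions G (adjoin G H g) (adjoin_char G H g \<chi> c))" for c
    using finite_reps[OF fin] unfolding char_extensions_def by (rule finite_subset[rotated]) auto
  show "char_extensions G (adjoin G H g) (adjoin_char G H g \<chi> c) \<inter>
      char_extensions G (adjoin G H g) (adjoin_char G H g \<chi> d) = {}"
    if "c \<in> {c. c ^ rel_order G H g = \<chi> (g [^] rel_order G H g)}"
      "d \<in> {c. c ^ rel_order G H g = \<chi> (g [^] rel_order G H g)}" "c \<noteq> d" for c d
    using that adjoin_char_gen[OF fin H g \<chi>] gen_in_adjoin[OF H g]
    unfolding char_extensions_def by auto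
qed

theorem card_char_extensions:
  assumes fin: "finite (carrier G)" and "subgroup H G" "subgroup_char G H \<chi>"
  shows "card (char_extensions G H \<chi>) * card H = order G"
  using assms(2,3)
proof (induction "card (carrier G - H)" arbitrary: H \<chi> rule: less_induct)
  case less
  note H = less.prems(1) and \<chi> = less.prems(2)
  show ?case
  proof (cases "H = carrier G")
    case True
    then show ?thesis using char_extensions_carrier \<chi> by (simp add: order_def)
  next
    case False
    obtain g where g: "g \<in> carrier G" "g \<notin> H" using subgroup.subset[OF H] False by blast
    define m where "m = rel_order G H g"
    define C where "C = {c. c ^ m = \<chi> (g [^] m)}"
    have m: "0 < m" "g [^] m \<in> H" using rel_order[OF fin H g(1)] by (auto simp: m_def)
    have "card (carrier G - adjoin G H g) < card (carrier G - H)"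
      using fin g subset_adjoin[OF H] gen_in_adjoin[OF H g(1)] by (intro psubset_card_mono) auto
    then have "card (char_extensions G (adjoin G H g) (adjoin_char G H g \<chi> c)) * card (adjoin G H g)
        = order G" if "c \<in> C" for c
      using less.hyps adjoin_subgroup[OF fin H g(1)] subgroup_char_adjoin_char[OF fin H g(1) \<chi>] that
      unfolding C_def m_def by blast
    then have "card (char_extensions G H \<chi>) * card (adjoin G H g) = card C * order G"
      using card_char_extensions_eq_sum_adjoin[OF fin H g(1) \<chi>]
      by (simp add: sum_distrib_right C_def m_def)
    moreover have "card C = m"
      unfolding C_def using card_nth_roots[OF subgroup_char_nonzero[OF \<chi> m(2)] m(1)] .
    ultimately show ?thesis using m(1) card_adjoin[OF fin H g(1)] by (simp add: m_def)
  qed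
qed

lemma char_extensions_nonempty:
  assumes "finite (carrier G)" "subgroup H G" "subgroup_char G H \<chi>"
  shows "char_extensions G H \<chi> \<noteq> {}"
proof
  assume "char_extensions G H \<chi> = {}"
  then have "order G = 0" using card_char_extensions[OF assms] by simp
  then show False using assms(1) order_gt_0_iff_finite by simp
qed

lemma card_annihilator:
  assumes "finite (carrier G)" "subgroup H G"
  shows "card (annihilator G H) * card H = order G"
proof -
  have "subgroup_char G H (restrict (\<lambda>_. 1) H)"
    using assms(2) by (auto simp: subgroup_char_def subgroup.m_closed)
  moreover have "annihilator G H = char_extensions G H (restrict (\<lambda>_. 1) H)"
    by (auto simp: annihilator_def char_extensions_def)
  ultimately show ?thesis using card_char_extensions[OF assms] by simp
qed

lemma annihilator_value_exists:
  assumes fin: "finite (carrier G)" and H: "subgroup H G" and p: "prime p"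
    and g: "g \<in> carrier G" "g \<notin> H" "g [^] p \<in> H" and u: "u ^ p = 1"
  shows "\<exists>\<phi>\<in>annihilator G H. \<phi> g = u"
proof -
  define \<chi> where "\<chi> = restrict (\<lambda>_. 1::complex) H"
  have \<chi>: "subgroup_char G H \<chi>" unfolding \<chi>_def using H by (auto simp: subgroup_char_def subgroup.m_closed)
  have "rel_order G H g dvd p" using rel_order_dvd[OF fin H g(1,3)] .
  moreover have "rel_order G H g \<noteq> 1" using rel_order(2)[OF fin H g(1)] g(1,2) by auto
  ultimately have "rel_order G H g = p" using p unfolding prime_nat_iff by blast
  then have c: "u ^ rel_order G H g = \<chi> (g [^] rel_order G H g)" using u g(3) by (simp add: \<chi>_def)
  obtain \<phi> where \<phi>: "\<phi> \<in> char_extensions G (adjoin G H g) (adjoin_char G H g \<chi> u)"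
    using char_extensions_nonempty[OF fin adjoin_subgroup[OF fin H g(1)]
        subgroup_char_adjoin_char[OF fin H g(1) \<chi> c]] by blast
  moreover have "adjoin_char G H g \<chi> u x = 1" if "x \<in> H" for x
    using adjoin_char_restrict[OF fin H g(1) \<chi> c that] that by (simp add: \<chi>_def restrict_def)
  ultimately have "\<phi> \<in> annihilator G H"
    using subset_adjoin[OF H] unfolding annihilator_def char_extensions_def by fastforce
  moreover have "\<phi> g = u"
    using \<phi> adjoin_char_gen[OF fin H g(1) \<chi> c] gen_in_adjoin[OF H g(1)]
    by (auto simp: char_extensions_def)
  ultimately show ?thesis by blast
qed

end

section \<open>Characters with a given image under \<open>\<psi>\<close>\<close>

lemma sum_b_elt:
  assumes "finite A" "x ` A \<subseteq> carrier G"
  shows "(\<Sum>i\<in>A. b_elt G p (f i) (x i)) =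
    int (card {i\<in>A. f i (x i) = 1}) - int (card {i\<in>A. f i (x i) = omega p})"
proof -
  have "(\<Sum>i\<in>A. b_elt G p (f i) (x i)) =
      (\<Sum>i\<in>A. (if f i (x i) = 1 then 1 else 0) - (if f i (x i) = omega p then 1 else 0))"
    using assms(2) unfolding b_elt_def by (intro sum.cong) auto
  also have "\<dots> = int (card {i\<in>A. f i (x i) = 1}) - int (card {i\<in>A. f i (x i) = omega p})"
    using assms(1) by (simp add: sum_subtractf flip: sum.inter_filter)
  finally show ?thesis .
qed

locale psi_setting = comm_group G for G :: "('a, 'b) monoid_scheme" (structure) +
  fixes p e :: nat and R :: "('a \<Rightarrow> complex) set" and \<rho> :: "'a \<Rightarrow> complex"
  assumes prime: "prime p" and finite_carrier: "finite (carrier G)"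
    and card_carrier: "card (carrier G) = p ^ e"
    and chosen: "chosen_reps G p R" and rho_in_R: "\<rho> \<in> R" and level_rho: "0 < level G p \<rho>"
begin

definition lifts :: "('a \<Rightarrow> complex) set" where
  "lifts = {\<tau>. rep G \<tau> \<and> psi_rep G p \<tau> = \<rho>}"

definition lift_reps :: "('a \<Rightarrow> complex) set" where
  "lift_reps = {\<tau>\<in>R. 0 < level G p \<tau> \<and> psi_rep G p \<tau> = \<rho>}"

lemma p_gt_1: "1 < p"
  using prime prime_gt_1_nat by blast

lemma omega_pow_p: "omega p ^ p = 1"
  using omega_pow_eq_1 p_gt_1 by simp

lemma omega_nonzero: "omega p \<noteq> 0"
  by (simp add: omega_def)

lemma rep_R: "\<tau> \<in> R \<Longrightarrow> rep G \<tau>"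
  using chosen unfolding chosen_reps_def by blast

lemma rep_rho: "rep G \<rho>"
  using rep_R[OF rho_in_R] .

lemma mem_lifts_iff: "\<tau> \<in> lifts \<longleftrightarrow> rep G \<tau> \<and> (\<forall>x\<in>carrier G. \<tau> (x [^] p) = \<rho> x)"
proof -
  have "psi_rep G p \<tau> = \<rho> \<longleftrightarrow> (\<forall>x\<in>carrier G. \<tau> (x [^] p) = \<rho> x)"
  proof
    assume "psi_rep G p \<tau> = \<rho>"
    then show "\<forall>x\<in>carrier G. \<tau> (x [^] p) = \<rho> x" unfolding psi_rep_def by (metis restrict_apply')
  next
    assume "\<forall>x\<in>carrier G. \<tau> (x [^] p) = \<rho> x"
    then show "psi_rep G p \<tau> = \<rho>"
      using rep_outside[OF rep_rho] unfolding psi_rep_def by (intro ext) auto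
  qed
  then show ?thesis unfolding lifts_def by simp
qed

lemma finite_lifts: "finite lifts"
  using finite_reps[OF finite_carrier] unfolding lifts_def by (rule finite_subset[rotated]) auto

lemma rho_nontrivial: "\<exists>x\<in>carrier G. \<rho> x \<noteq> 1"
  using level_pos_iff[OF finite_carrier prime card_carrier rep_rho] level_rho by simp

text \<open>A nontrivial character of a \<open>p\<close>-group has some value of order exactly \<open>p\<close>, whose powers
  exhaust the \<open>p\<close>-th roots of unity.\<close>
lemma roots_of_unity_in_image:
  assumes u: "u ^ p = 1"
  shows "\<exists>x\<in>carrier G. \<rho> x = u"
proof -
  obtain x0 where x0: "x0 \<in> carrier G" "\<rho> x0 \<noteq> 1" using rho_nontrivial by blast
  define z where "z = \<rho> x0"
  have "z ^ (p ^ e) = 1" using rep_pow_order[OF rep_rho x0(1)] card_carrier by (simp add: z_def order_def)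
  then have "\<exists>d. z ^ (p ^ d) = 1" by blast
  define d where "d = (LEAST d. z ^ (p ^ d) = 1)"
  have zd: "z ^ (p ^ d) = 1" unfolding d_def using \<open>\<exists>d. z ^ (p ^ d) = 1\<close> by (rule LeastI_ex)
  have d0: "d \<noteq> 0" using zd x0(2) unfolding z_def by (cases d) auto
  have "z ^ (p ^ (d - 1)) \<noteq> 1"
    using not_less_Least[of "d - 1" "\<lambda>d. z ^ (p ^ d) = 1"] d0 unfolding d_def by simp
  moreover have "(z ^ (p ^ (d - 1))) ^ p = 1"
    using zd d0 by (cases d) (auto simp: power_mult[symmetric] mult.commute)
  ultimately obtain i where "u = (z ^ (p ^ (d - 1))) ^ i"
    using prime_root_of_unity_powers[OF prime _ _ u] by blast
  then have "u = \<rho> (x0 [^] (p ^ (d - 1) * i))"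
    using rep_pow[OF rep_rho x0(1)] by (simp add: z_def power_mult)
  then show ?thesis using x0(1) by blast
qed

lemma b_elt_eq_if_same_kernel:
  assumes t: "t \<in> lifts" and \<tau>: "\<tau> \<in> lifts" and K: "rker G \<tau> = rker G t"
  shows "b_elt G p \<tau> h = b_elt G p t h"
proof (cases "h \<in> carrier G")
  case h: True
  have one: "\<tau> h = 1 \<longleftrightarrow> t h = 1" using K h unfolding rker_def by blast
  obtain a where a: "a \<in> carrier G" "\<rho> a = omega p" using roots_of_unity_in_image omega_pow_p by blast
  have "\<tau> h = omega p \<longleftrightarrow> t h = omega p"
  proof -
    have "\<tau> (a [^] p) = omega p" "t (a [^] p) = omega p" using t \<tau> a by (auto simp: mem_lifts_iff)
    then show ?thesis
      using rep_eq_if_same_kernel[of t \<tau> h "a [^] p"] rep_eq_if_same_kernel[of \<tau> t h "a [^] p"]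
        t \<tau> K h a(1) by (auto simp: mem_lifts_iff)
  qed
  then show ?thesis using one unfolding b_elt_def by simp
qed (simp add: b_elt_def)

text \<open>For a lift \<open>t\<close>, the index-\<open>p\<close> subgroup \<open>t\<^sup>-\<^sup>1(\<rho>(G))\<close>; the lifts with the kernel of \<open>t\<close> are
  exactly the products of \<open>t\<close> with the characters trivial on it.\<close>
definition lift_core :: "('a \<Rightarrow> complex) \<Rightarrow> 'a set" where
  "lift_core t = {x\<in>carrier G. t x \<in> \<rho> ` carrier G}"

context
  fixes t assumes t: "t \<in> lifts"
begin

lemma rep_lift: "rep G t" and lift_pow: "x \<in> carrier G \<Longrightarrow> t (x [^] p) = \<rho> x"
  using t by (auto simp: mem_lifts_iff)

lemma pow_in_lift_core: "x \<in> carrier G \<Longrightarrow> x [^] p \<in> lift_core t"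
  using lift_pow by (auto simp: lift_core_def)

lemma subgroup_lift_core: "subgroup (lift_core t) G"
proof (rule subgroupI)
  show "lift_core t \<subseteq> carrier G" unfolding lift_core_def by blast
  show "lift_core t \<noteq> {}" using pow_in_lift_core one_closed by blast
next
  fix a assume "a \<in> lift_core t"
  then obtain y where a: "a \<in> carrier G" "y \<in> carrier G" "t a = \<rho> y" unfolding lift_core_def by blast
  then have "t (inv a) = \<rho> (inv y)" using rep_inv[OF rep_lift] rep_inv[OF rep_rho] by simp
  then show "inv a \<in> lift_core t" using a unfolding lift_core_def by auto
next
  fix a b assume "a \<in> lift_core t" "b \<in> lift_core t"
  then obtain y z where a: "a \<in> carrier G" "y \<in> carrier G" "t a = \<rho> y"
    and b: "b \<in> carrier G" "z \<in> carrier G" "t b = \<rho> z" unfolding lift_core_def by blast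
  then have "t (a \<otimes> b) = \<rho> (y \<otimes> z)" using rep_mult[OF rep_lift] rep_mult[OF rep_rho] by simp
  then show "a \<otimes> b \<in> lift_core t" using a b unfolding lift_core_def by auto
qed

lemma rker_subset_lift_core: "rker G t \<subseteq> lift_core t"
  using rep_one[OF rep_rho] one_closed unfolding lift_core_def rker_def by force

lemma image_lift_core: "t ` lift_core t = \<rho> ` carrier G"
proof (intro subset_antisym subsetI)
  fix v assume "v \<in> \<rho> ` carrier G"
  then obtain a where "a \<in> carrier G" "v = \<rho> a" by blast
  then show "v \<in> t ` lift_core t" using lift_pow pow_in_lift_core by (metis image_eqI)
qed (auto simp: lift_core_def)

text \<open>\<open>z \<mapsto> z ^ p\<close> maps \<open>t(G)\<close> onto \<open>\<rho>(G)\<close> with fibres the cosets of \<open>\<mu>\<^sub>p \<subseteq> \<rho>(G) \<subseteq> t(G)\<close>.\<close>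
lemma card_image_lift: "card (t ` carrier G) = p * card (\<rho> ` carrier G)"
proof -
  have img: "(\<lambda>z. z ^ p) ` t ` carrier G = \<rho> ` carrier G"
    using lift_pow rep_pow[OF rep_lift] by (force simp del: power_Suc)
  have "card (t ` carrier G) = p * card ((\<lambda>z. z ^ p) ` t ` carrier G)"
  proof (rule card_eq_mult_card_image)
    show "finite (t ` carrier G)" using finite_carrier by simp
    fix v assume "v \<in> (\<lambda>z. z ^ p) ` t ` carrier G"
    then obtain x0 where x0: "x0 \<in> carrier G" "v = t x0 ^ p" by blast
    have z0: "t x0 \<noteq> 0" using rep_nonzero[OF rep_lift x0(1)] .
    have "{z \<in> t ` carrier G. z ^ p = v} = (\<lambda>u. t x0 * u) ` {u. u ^ p = 1}"
    proof (intro subset_antisym subsetI)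
      fix z assume "z \<in> {z \<in> t ` carrier G. z ^ p = v}"
      then have "(z / t x0) ^ p = 1" "z = t x0 * (z / t x0)" using x0 z0 by (auto simp: power_divide)
      then show "z \<in> (\<lambda>u. t x0 * u) ` {u. u ^ p = 1}" by blast
    next
      fix z assume "z \<in> (\<lambda>u. t x0 * u) ` {u. u ^ p = 1}"
      then obtain u where u: "u ^ p = 1" "z = t x0 * u" by blast
      obtain a where a: "a \<in> carrier G" "\<rho> a = u" using roots_of_unity_in_image[OF u(1)] by blast
      have "z = t (x0 \<otimes> a [^] p)" using u a x0 lift_pow by (simp add: rep_mult[OF rep_lift])
      moreover have "z ^ p = v" using x0 u by (simp add: power_mult_distrib)
      ultimately show "z \<in> {z \<in> t ` carrier G. z ^ p = v}" using x0 a by blast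
    qed
    moreover have "inj_on (\<lambda>u. t x0 * u) {u. u ^ p = 1}" using z0 by (auto intro: inj_onI)
    ultimately show "card {z \<in> t ` carrier G. z ^ p = v} = p"
      using card_roots_unity_eq p_gt_1 by (simp add: card_image)
  qed
  then show ?thesis using img by simp
qed

lemma card_carrier_eq_p_mult_card_lift_core: "card (carrier G) = p * card (lift_core t)"
  using card_subgroup_eq_card_rker_mult[OF finite_carrier rep_lift subgroup_lift_core rker_subset_lift_core]
    card_subgroup_eq_card_rker_mult[OF finite_carrier rep_lift subgroup_self]
    image_lift_core card_image_lift
  by (simp add: rker_def)

lemma card_annihilator_lift_core: "card (annihilator G (lift_core t)) = p"
proof -
  have "card (lift_core t) > 0"
    using subgroup.finite_imp_card_positive[OF subgroup_lift_core finite_carrier] .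
  then show ?thesis
    using card_annihilator[OF finite_carrier subgroup_lift_core] card_carrier_eq_p_mult_card_lift_core
    by (simp add: order_def)
qed

lemma div_lift_mem_annihilator:
  assumes \<tau>: "\<tau> \<in> lifts" "rker G \<tau> = rker G t"
  shows "restrict (\<lambda>x. \<tau> x / t x) (carrier G) \<in> annihilator G (lift_core t)"
proof -
  have r: "rep G \<tau>" using \<tau>(1) by (simp add: mem_lifts_iff)
  have "restrict (\<lambda>x. \<tau> x / t x) (carrier G) x = 1" if x: "x \<in> lift_core t" for x
  proof -
    obtain a where a: "x \<in> carrier G" "a \<in> carrier G" "t x = \<rho> a"
      using x unfolding lift_core_def by blast
    then have "t x = t (a [^] p)" using lift_pow by simp
    then have "\<tau> x = \<tau> (a [^] p)"
      using a by (intro rep_eq_if_same_kernel[OF rep_lift r \<tau>(2)]) auto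
    also have "\<dots> = t x" using a \<tau>(1) lift_pow by (simp add: mem_lifts_iff)
    finally show ?thesis using a(1) rep_nonzero[OF rep_lift a(1)] by simp
  qed
  then show ?thesis using rep_divide[OF r rep_lift] by (simp add: annihilator_def)
qed

lemma mult_lift_mem_lifts:
  assumes \<phi>: "\<phi> \<in> annihilator G (lift_core t)"
  shows "restrict (\<lambda>x. \<phi> x * t x) (carrier G) \<in> lifts" (is "?\<tau> \<in> _")
    and "rker G (restrict (\<lambda>x. \<phi> x * t x) (carrier G)) = rker G t"
proof -
  have r: "rep G \<phi>" and \<phi>1: "\<And>x. x \<in> lift_core t \<Longrightarrow> \<phi> x = 1"
    using \<phi> by (auto simp: annihilator_def)
  have "?\<tau> (x [^] p) = \<rho> x" if "x \<in> carrier G" for x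
    using that \<phi>1[OF pow_in_lift_core[OF that]] lift_pow[OF that] by simp
  then show "?\<tau> \<in> lifts" using rep_times[OF r rep_lift] by (simp add: mem_lifts_iff)
  have "\<phi> x * t x = 1 \<longleftrightarrow> t x = 1" if x: "x \<in> carrier G" for x
  proof
    assume "t x = 1"
    then have "x \<in> lift_core t" using rker_subset_lift_core x by (auto simp: rker_def)
    then show "\<phi> x * t x = 1" using \<phi>1 \<open>t x = 1\<close> by simp
  next
    assume e1: "\<phi> x * t x = 1"
    have "\<phi> x ^ p = 1" using rep_pow[OF r x] \<phi>1[OF pow_in_lift_core[OF x]] by simp
    moreover have "(\<phi> x * t x) ^ p = 1" using e1 by simp
    ultimately have "t x ^ p = 1" by (simp add: power_mult_distrib)
    then obtain b where "b \<in> carrier G" "\<rho> b = t x" using roots_of_unity_in_image by metis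
    then have "x \<in> lift_core t" using x unfolding lift_core_def by force
    then show "t x = 1" using e1 \<phi>1 by simp
  qed
  then show "rker G ?\<tau> = rker G t" unfolding rker_def by auto
qed

lemma card_same_kernel_lifts: "card {\<tau>\<in>lifts. rker G \<tau> = rker G t} = p"
proof -
  have "bij_betw (\<lambda>\<tau>. restrict (\<lambda>x. \<tau> x / t x) (carrier G))
      {\<tau>\<in>lifts. rker G \<tau> = rker G t} (annihilator G (lift_core t))"
  proof (rule bij_betw_byWitness[where f' = "\<lambda>\<phi>. restrict (\<lambda>x. \<phi> x * t x) (carrier G)"])
    show "\<forall>\<tau>\<in>{\<tau>\<in>lifts. rker G \<tau> = rker G t}.
        restrict (\<lambda>x. restrict (\<lambda>x. \<tau> x / t x) (carrier G) x * t x) (carrier G) = \<tau>"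
      using rep_divide_times_cancel[OF _ rep_lift] by (simp add: mem_lifts_iff)
    show "\<forall>\<phi>\<in>annihilator G (lift_core t).
        restrict (\<lambda>x. restrict (\<lambda>x. \<phi> x * t x) (carrier G) x / t x) (carrier G) = \<phi>"
      using rep_times_divide_cancel[OF _ rep_lift] by (simp add: annihilator_def)
  qed (use div_lift_mem_annihilator mult_lift_mem_lifts in auto)
  then show ?thesis using card_annihilator_lift_core by (simp add: bij_betw_same_card)
qed

end

definition chosen_rep :: "('a \<Rightarrow> complex) \<Rightarrow> 'a \<Rightarrow> complex" where
  "chosen_rep \<tau> = (THE \<sigma>. \<sigma> \<in> R \<and> rep_equiv G \<sigma> \<tau>)"

lemma chosen_rep:
  assumes "rep G \<tau>"
  shows "chosen_rep \<tau> \<in> R" "rker G (chosen_rep \<tau>) = rker G \<tau>"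
    and "\<And>\<sigma>. \<sigma> \<in> R \<Longrightarrow> rker G \<sigma> = rker G \<tau> \<Longrightarrow> chosen_rep \<tau> = \<sigma>"
proof -
  have ex: "\<exists>!\<sigma>. \<sigma> \<in> R \<and> rep_equiv G \<sigma> \<tau>" using chosen assms unfolding chosen_reps_def by blast
  then show "chosen_rep \<tau> \<in> R" "rker G (chosen_rep \<tau>) = rker G \<tau>"
    using theI'[OF ex] unfolding chosen_rep_def rep_equiv_def by auto
  show "chosen_rep \<tau> = \<sigma>" if "\<sigma> \<in> R" "rker G \<sigma> = rker G \<tau>" for \<sigma>
    using ex that unfolding chosen_rep_def rep_equiv_def by (intro the1_equality) auto
qed

lemma psi_rep_chosen:
  "\<tau> \<in> R \<Longrightarrow> \<sigma> \<in> R \<Longrightarrow> 0 < level G p \<tau> \<Longrightarrow> rker G (psi_rep G p \<tau>) = rker G \<sigma> \<Longrightarrow>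
    psi_rep G p \<tau> = \<sigma>"
  using chosen unfolding chosen_reps_def rep_equiv_def by blast

lemma lift_reps_subset_lifts: "lift_reps \<subseteq> lifts"
  unfolding lift_reps_def lifts_def using rep_R by auto

text \<open>This is where the compatibility of the choice of representatives with \<open>\<psi>\<close> is used.\<close>
lemma chosen_rep_mem_lift_reps:
  assumes \<tau>: "\<tau> \<in> lifts"
  shows "chosen_rep \<tau> \<in> lift_reps"
proof -
  have r: "rep G \<tau>" using \<tau> by (simp add: mem_lifts_iff)
  define t where "t = chosen_rep \<tau>"
  have tR: "t \<in> R" and K: "rker G t = rker G \<tau>" using chosen_rep(1,2)[OF r] by (auto simp: t_def)
  have rt: "rep G t" using rep_R[OF tR] .
  have K_pow: "t (x [^] p) = 1 \<longleftrightarrow> \<rho> x = 1" if x: "x \<in> carrier G" for x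
  proof -
    have "t (x [^] p) = 1 \<longleftrightarrow> x [^] p \<in> rker G t" using x by (simp add: rker_def)
    also have "\<dots> \<longleftrightarrow> x [^] p \<in> rker G \<tau>" by (simp only: K)
    also have "\<dots> \<longleftrightarrow> \<tau> (x [^] p) = 1" using x by (simp add: rker_def)
    also have "\<dots> \<longleftrightarrow> \<rho> x = 1" using \<tau> x by (simp add: mem_lifts_iff)
    finally show ?thesis .
  qed
  obtain x where x: "x \<in> carrier G" "\<rho> x \<noteq> 1" using rho_nontrivial by blast
  then have "t (x [^] p) \<noteq> 1" "x [^] p \<in> carrier G" using K_pow by auto
  then have level: "0 < level G p t"
    using level_pos_iff[OF finite_carrier prime card_carrier rt] by blast
  have "rker G (psi_rep G p t) = rker G \<rho>"
    using K_pow unfolding rker_def psi_rep_def by auto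
  then have "psi_rep G p t = \<rho>" using psi_rep_chosen tR rho_in_R level by blast
  then show ?thesis using tR level unfolding lift_reps_def t_def by simp
qed

lemma sum_lifts_eq_sum_lift_reps:
  "(\<Sum>\<tau>\<in>lifts. b_elt G p \<tau> h) = (\<Sum>t\<in>lift_reps. int p * b_elt G p t h)"
proof -
  have "chosen_rep ` lifts \<subseteq> lift_reps" using chosen_rep_mem_lift_reps by blast
  then have "(\<Sum>\<tau>\<in>lifts. b_elt G p \<tau> h) = (\<Sum>t\<in>lift_reps. \<Sum>\<tau>\<in>{\<tau>\<in>lifts. chosen_rep \<tau> = t}. b_elt G p \<tau> h)"
    by (rule sum.group[OF finite_lifts finite_subset[OF lift_reps_subset_lifts finite_lifts], symmetric])
  also have "\<dots> = (\<Sum>t\<in>lift_reps. int p * b_elt G p t h)"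
  proof (rule sum.cong[OF refl])
    fix t assume t: "t \<in> lift_reps"
    then have tS: "t \<in> lifts" and tR: "t \<in> R" using lift_reps_subset_lifts lift_reps_def by auto
    have "chosen_rep \<tau> = t \<longleftrightarrow> rker G \<tau> = rker G t" if "\<tau> \<in> lifts" for \<tau>
    proof -
      have r: "rep G \<tau>" using that by (simp add: mem_lifts_iff)
      show ?thesis using chosen_rep(2)[OF r] chosen_rep(3)[OF r tR] by auto
    qed
    then have "{\<tau>\<in>lifts. chosen_rep \<tau> = t} = {\<tau>\<in>lifts. rker G \<tau> = rker G t}" by blast
    then have "(\<Sum>\<tau>\<in>{\<tau>\<in>lifts. chosen_rep \<tau> = t}. b_elt G p \<tau> h)
        = (\<Sum>\<tau>\<in>{\<tau>\<in>lifts. rker G \<tau> = rker G t}. b_elt G p t h)"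
      using b_elt_eq_if_same_kernel[OF tS] by (intro sum.cong) auto
    then show "(\<Sum>\<tau>\<in>{\<tau>\<in>lifts. chosen_rep \<tau> = t}. b_elt G p \<tau> h) = int p * b_elt G p t h"
      using card_same_kernel_lifts[OF tS] by simp
  qed
  finally show ?thesis .
qed

end

section \<open>The value of \<open>\<psi>\<^sup>p(b\<^sub>\<rho>)\<close> at a point\<close>

context psi_setting
begin

definition pth_powers :: "'a set" where
  "pth_powers = (\<lambda>x. x [^] p) ` carrier G"

definition p_torsion :: "'a set" where
  "p_torsion = {x\<in>carrier G. x [^] p = \<one>}"

lemma psi_grp_b_elt_eq:
  "psi_grp G p (b_elt G p \<sigma>) h = int (card {g\<in>carrier G. g [^] p = h \<and> \<sigma> g = 1})
     - int (card {g\<in>carrier G. g [^] p = h \<and> \<sigma> g = omega p})"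
  using sum_b_elt[where A = "{g\<in>carrier G. g [^] p = h}" and x = "\<lambda>g. g" and f = "\<lambda>_. \<sigma>" and G = G and p = p] finite_carrier
  by (simp add: psi_grp_def conj_assoc)

lemma sum_lifts_b_elt_eq:
  "h \<in> carrier G \<Longrightarrow> (\<Sum>\<tau>\<in>lifts. b_elt G p \<tau> h) =
     int (card {\<tau>\<in>lifts. \<tau> h = 1}) - int (card {\<tau>\<in>lifts. \<tau> h = omega p})"
  using sum_b_elt[where A = lifts and x = "\<lambda>_. h" and f = "\<lambda>\<tau>. \<tau>" and G = G and p = p] finite_lifts by (simp add: image_subset_iff)

lemma subgroup_pth_powers: "subgroup pth_powers G"
proof (rule subgroupI)
  show "pth_powers \<subseteq> carrier G" "pth_powers \<noteq> {}" unfolding pth_powers_def by auto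
next
  fix a assume "a \<in> pth_powers"
  then obtain x where x: "x \<in> carrier G" "a = x [^] p" unfolding pth_powers_def by blast
  then have "inv a = inv x [^] p" by (simp add: nat_pow_inv)
  then show "inv a \<in> pth_powers" unfolding pth_powers_def using x(1) by blast
next
  fix a b assume "a \<in> pth_powers" "b \<in> pth_powers"
  then obtain x y where xy: "x \<in> carrier G" "a = x [^] p" "y \<in> carrier G" "b = y [^] p"
    unfolding pth_powers_def by blast
  then have "a \<otimes> b = (x \<otimes> y) [^] p" by (simp add: nat_pow_distrib)
  then show "a \<otimes> b \<in> pth_powers" unfolding pth_powers_def using xy by blast
qed

lemma card_pow_fibre:
  assumes x0: "x0 \<in> carrier G"
  shows "card {x\<in>carrier G. x [^] p = x0 [^] p} = card p_torsion"
proof -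
  have "{x\<in>carrier G. x [^] p = x0 [^] p} = (\<lambda>t. x0 \<otimes> t) ` p_torsion"
  proof (intro subset_antisym subsetI)
    fix x assume x: "x \<in> {x\<in>carrier G. x [^] p = x0 [^] p}"
    then have "inv x0 \<otimes> x \<in> p_torsion"
      using x0 by (simp add: p_torsion_def nat_pow_distrib nat_pow_inv)
    moreover have "x = x0 \<otimes> (inv x0 \<otimes> x)" using x x0 by (simp add: m_assoc[symmetric])
    ultimately show "x \<in> (\<lambda>t. x0 \<otimes> t) ` p_torsion" by blast
  qed (use x0 in \<open>auto simp: p_torsion_def nat_pow_distrib\<close>)
  moreover have "inj_on (\<lambda>t. x0 \<otimes> t) p_torsion"
    using inj_on_cmult[OF x0] by (rule inj_on_subset) (auto simp: p_torsion_def)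
  ultimately show ?thesis by (simp add: card_image)
qed

lemma card_carrier_eq_card_p_torsion_mult: "card (carrier G) = card p_torsion * card pth_powers"
  unfolding pth_powers_def using finite_carrier card_pow_fibre by (intro card_eq_mult_card_image) auto

lemma psi_grp_eq_0_outside_pth_powers: "h \<notin> pth_powers \<Longrightarrow> psi_grp G p f h = 0"
  unfolding psi_grp_def pth_powers_def by (auto intro: sum.neutral)

lemma lifts_empty_if_torsion_nontrivial:
  assumes "x0 \<in> p_torsion" "\<rho> x0 \<noteq> 1"
  shows "lifts = {}"
proof (rule equals0I)
  fix \<tau> assume "\<tau> \<in> lifts"
  then have "\<rho> x0 = \<tau> \<one>" using assms(1) by (auto simp: mem_lifts_iff p_torsion_def)
  then show False using assms(2) rep_one \<open>\<tau> \<in> lifts\<close> by (simp add: mem_lifts_iff)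
qed

text \<open>If \<open>\<rho>\<close> is nontrivial on the \<open>p\<close>-torsion, some torsion element \<open>y\<close> has \<open>\<rho> y = \<omega>\<close>, and
  \<open>g \<mapsto> g y\<close> matches the two halves of each fibre of \<open>g \<mapsto> g ^ p\<close>.\<close>
lemma psi_grp_b_rho_eq_0_if_torsion_nontrivial:
  assumes x0: "x0 \<in> p_torsion" "\<rho> x0 \<noteq> 1"
  shows "psi_grp G p (b_elt G p \<rho>) h = 0"
proof -
  have x0c: "x0 \<in> carrier G" and x0p: "x0 [^] p = \<one>" using x0(1) by (auto simp: p_torsion_def)
  have "\<rho> x0 ^ p = 1" using rep_pow[OF rep_rho x0c, of p] x0p rep_one[OF rep_rho] by simp
  then obtain j where j: "omega p = \<rho> x0 ^ j"
    using prime_root_of_unity_powers[OF prime _ x0(2) omega_pow_p] by blast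
  define y where "y = x0 [^] j"
  have "y [^] p = (x0 [^] p) [^] j" using x0c by (simp add: y_def nat_pow_pow mult.commute)
  then have y: "y \<in> carrier G" "\<rho> y = omega p" "y [^] p = \<one>"
    using x0c x0p j rep_pow[OF rep_rho x0c] by (auto simp: y_def)
  have "bij_betw (\<lambda>g. g \<otimes> y) {g\<in>carrier G. g [^] p = h \<and> \<rho> g = 1}
      {g\<in>carrier G. g [^] p = h \<and> \<rho> g = omega p}"
  proof (rule bij_betw_byWitness[where f' = "\<lambda>g. g \<otimes> inv y"])
    show "(\<lambda>g. g \<otimes> y) ` {g\<in>carrier G. g [^] p = h \<and> \<rho> g = 1}
        \<subseteq> {g\<in>carrier G. g [^] p = h \<and> \<rho> g = omega p}"
      using y by (auto simp: nat_pow_distrib rep_mult[OF rep_rho])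
    show "(\<lambda>g. g \<otimes> inv y) ` {g\<in>carrier G. g [^] p = h \<and> \<rho> g = omega p}
        \<subseteq> {g\<in>carrier G. g [^] p = h \<and> \<rho> g = 1}"
      using y omega_nonzero by (auto simp: nat_pow_distrib nat_pow_inv rep_mult[OF rep_rho] rep_inv[OF rep_rho])
  qed (use y in \<open>auto simp: m_assoc\<close>)
  then show ?thesis by (simp add: psi_grp_b_elt_eq bij_betw_same_card)
qed

text \<open>When \<open>\<rho>\<close> kills the \<open>p\<close>-torsion it factors through \<open>x \<mapsto> x ^ p\<close>: \<open>\<rho> = rho_descent \<circ> (^p)\<close>.\<close>
definition rho_descent :: "'a \<Rightarrow> complex" where
  "rho_descent = restrict (\<lambda>y. \<rho> (SOME x. x \<in> carrier G \<and> x [^] p = y)) pth_powers"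

context
  assumes torsion_trivial: "\<forall>x\<in>p_torsion. \<rho> x = 1"
begin

lemma rho_eq_if_pow_eq:
  assumes "x \<in> carrier G" "x' \<in> carrier G" "x [^] p = x' [^] p"
  shows "\<rho> x = \<rho> x'"
proof -
  have "(x \<otimes> inv x') [^] p = \<one>" using assms by (simp add: nat_pow_distrib nat_pow_inv)
  then have "\<rho> (x \<otimes> inv x') = 1" using torsion_trivial assms by (simp add: p_torsion_def)
  then have "\<rho> x * inverse (\<rho> x') = 1" using assms by (simp add: rep_mult[OF rep_rho] rep_inv[OF rep_rho])
  then show ?thesis using rep_nonzero[OF rep_rho assms(2)] by (simp add: field_simps)
qed

lemma rho_descent_pow:
  assumes x: "x \<in> carrier G"
  shows "rho_descent (x [^] p) = \<rho> x"
proof -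
  let ?P = "\<lambda>z. z \<in> carrier G \<and> z [^] p = x [^] p"
  have "?P (SOME z. ?P z)" using x by (intro someI[of ?P x]) simp
  then have "\<rho> (SOME z. ?P z) = \<rho> x" using rho_eq_if_pow_eq x by blast
  moreover have "x [^] p \<in> pth_powers" using x by (simp add: pth_powers_def)
  ultimately show ?thesis by (simp add: rho_descent_def)
qed

lemma subgroup_char_rho_descent: "subgroup_char G pth_powers rho_descent"
  unfolding subgroup_char_def
proof (intro conjI ballI)
  show "rho_descent \<in> extensional pth_powers" unfolding rho_descent_def by simp
  fix y assume "y \<in> pth_powers"
  then obtain x where x: "x \<in> carrier G" "y = x [^] p" unfolding pth_powers_def by blast
  then show "rho_descent y \<noteq> 0" using rho_descent_pow rep_nonzero[OF rep_rho] by simp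
  fix z assume "z \<in> pth_powers"
  then obtain x' where x': "x' \<in> carrier G" "z = x' [^] p" unfolding pth_powers_def by blast
  have "y \<otimes> z = (x \<otimes> x') [^] p" using x x' by (simp add: nat_pow_distrib)
  then show "rho_descent (y \<otimes> z) = rho_descent y * rho_descent z"
    using x x' rho_descent_pow rep_mult[OF rep_rho] by simp
qed

lemma lifts_eq_char_extensions: "lifts = char_extensions G pth_powers rho_descent"
proof -
  have "(\<forall>x\<in>carrier G. \<tau> (x [^] p) = \<rho> x) \<longleftrightarrow> (\<forall>y\<in>pth_powers. \<tau> y = rho_descent y)" for \<tau>
    using rho_descent_pow by (auto simp: pth_powers_def)
  then show ?thesis unfolding char_extensions_def by (auto simp: mem_lifts_iff)
qed

lemma card_lifts: "card lifts = card p_torsion"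
proof -
  have "card lifts * card pth_powers = card p_torsion * card pth_powers"
    using card_char_extensions[OF finite_carrier subgroup_pth_powers subgroup_char_rho_descent]
      card_carrier_eq_card_p_torsion_mult lifts_eq_char_extensions by (simp add: order_def)
  moreover have "card pth_powers > 0"
    using subgroup.finite_imp_card_positive[OF subgroup_pth_powers finite_carrier] .
  ultimately show ?thesis by simp
qed

text \<open>On a \<open>p\<close>-th power \<open>h = x\<^sub>0 ^ p\<close> every term on either side equals \<open>b\<^sub>\<rho>(x\<^sub>0)\<close>, and both
  sides have \<open>|G[p]|\<close> terms.\<close>
lemma psi_grp_b_rho_pth_power:
  assumes x0: "x0 \<in> carrier G"
  shows "psi_grp G p (b_elt G p \<rho>) (x0 [^] p) = (\<Sum>\<tau>\<in>lifts. b_elt G p \<tau> (x0 [^] p))"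
proof -
  have "psi_grp G p (b_elt G p \<rho>) (x0 [^] p) = (\<Sum>g\<in>{g\<in>carrier G. g [^] p = x0 [^] p}. b_elt G p \<rho> x0)"
    unfolding psi_grp_def
  proof (intro sum.cong refl)
    fix g assume "g \<in> {g\<in>carrier G. g [^] p = x0 [^] p}"
    then have "g \<in> carrier G" "\<rho> g = \<rho> x0" using rho_eq_if_pow_eq[of g x0] x0 by auto
    then show "b_elt G p \<rho> g = b_elt G p \<rho> x0" using x0 by (simp add: b_elt_def)
  qed
  also have "\<dots> = (\<Sum>\<tau>\<in>lifts. b_elt G p \<rho> x0)" using card_pow_fibre[OF x0] card_lifts by simp
  also have "\<dots> = (\<Sum>\<tau>\<in>lifts. b_elt G p \<tau> (x0 [^] p))"
    using x0 by (intro sum.cong) (auto simp: b_elt_def mem_lifts_iff)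
  finally show ?thesis .
qed

text \<open>Off the \<open>p\<close>-th powers, multiplication by a character \<open>\<phi>\<close> trivial on them with
  \<open>\<phi>(h) = \<omega>\<close> permutes the lifts and matches those with \<open>\<tau>(h) = 1\<close> to those with \<open>\<tau>(h) = \<omega>\<close>.\<close>
lemma sum_lifts_b_elt_outside_pth_powers:
  assumes h: "h \<notin> pth_powers"
  shows "(\<Sum>\<tau>\<in>lifts. b_elt G p \<tau> h) = 0"
proof (cases "h \<in> carrier G")
  case hc: True
  have "h [^] p \<in> pth_powers" using hc by (auto simp: pth_powers_def)
  then obtain \<phi> where \<phi>: "\<phi> \<in> annihilator G pth_powers" "\<phi> h = omega p"
    using annihilator_value_exists[OF finite_carrier subgroup_pth_powers prime hc h _ omega_pow_p] by blast
  then have r: "rep G \<phi>" and \<phi>p: "\<And>x. x \<in> carrier G \<Longrightarrow> \<phi> (x [^] p) = 1"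
    by (auto simp: annihilator_def pth_powers_def)
  define f where "f \<tau> = restrict (\<lambda>x. \<tau> x * \<phi> x) (carrier G)" for \<tau>
  define f' where "f' \<tau> = restrict (\<lambda>x. \<tau> x / \<phi> x) (carrier G)" for \<tau>
  have "bij_betw f {\<tau>\<in>lifts. \<tau> h = 1} {\<tau>\<in>lifts. \<tau> h = omega p}"
  proof (rule bij_betw_byWitness[where f' = f'])
    show "\<forall>\<tau>\<in>{\<tau>\<in>lifts. \<tau> h = 1}. f' (f \<tau>) = \<tau>" "\<forall>\<tau>\<in>{\<tau>\<in>lifts. \<tau> h = omega p}. f (f' \<tau>) = \<tau>"
      using rep_times_divide_cancel[OF _ r] rep_divide_times_cancel[OF _ r]
      unfolding f_def f'_def by (simp_all add: mem_lifts_iff)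
    show "f ` {\<tau>\<in>lifts. \<tau> h = 1} \<subseteq> {\<tau>\<in>lifts. \<tau> h = omega p}"
      using hc \<phi>(2) \<phi>p rep_times[OF _ r] by (auto simp: f_def mem_lifts_iff)
    show "f' ` {\<tau>\<in>lifts. \<tau> h = omega p} \<subseteq> {\<tau>\<in>lifts. \<tau> h = 1}"
      using hc \<phi>(2) \<phi>p rep_divide[OF _ r] omega_nonzero by (auto simp: f'_def mem_lifts_iff)
  qed
  then show ?thesis using hc by (simp add: sum_lifts_b_elt_eq bij_betw_same_card)
qed (simp add: b_elt_def)

end

lemma psi_grp_b_rho_eq_sum_lifts:
  "psi_grp G p (b_elt G p \<rho>) h = (\<Sum>\<tau>\<in>lifts. b_elt G p \<tau> h)"
proof (cases "\<forall>x\<in>p_torsion. \<rho> x = 1")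
  case trivial: True
  show ?thesis
  proof (cases "h \<in> pth_powers")
    case True
    then obtain x0 where "x0 \<in> carrier G" "h = x0 [^] p" by (auto simp: pth_powers_def)
    then show ?thesis using psi_grp_b_rho_pth_power[OF trivial] by simp
  next
    case False
    then show ?thesis
      using psi_grp_eq_0_outside_pth_powers sum_lifts_b_elt_outside_pth_powers[OF trivial] by simp
  qed
next
  case False
  then obtain x0 where "x0 \<in> p_torsion" "\<rho> x0 \<noteq> 1" by blast
  then show ?thesis
    using lifts_empty_if_torsion_nontrivial psi_grp_b_rho_eq_0_if_torsion_nontrivial by simp
qed

end

theorem mainTheorem5:
  fixes G :: "('a, 'b) monoid_scheme" and p e k :: nat and R :: "('a \<Rightarrow> complex) set"
    and \<rho> :: "'a \<Rightarrow> complex"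
  assumes "prime (p::nat)" and "e \<ge> 1"
    and "comm_group G" and "finite (carrier G)" and "card (carrier G) = p ^ e"
    and "chosen_reps G p R"
    and "\<rho> \<in> R" and "level G p \<rho> = k" and "k > 0"
  shows "psi_grp G p (b_elt G p \<rho>) =
    (\<lambda>x. \<Sum>\<tau>\<in>{\<tau> \<in> R. level G p \<tau> > 0 \<and> psi_rep G p \<tau> = \<rho>}. int p * b_elt G p \<tau> x)"
proof -
  interpret psi_setting G p e R \<rho>
    using assms by (intro psi_setting.intro psi_setting_axioms.intro) auto
  show ?thesis
    using psi_grp_b_rho_eq_sum_lifts sum_lifts_eq_sum_lift_reps unfolding lift_reps_def by auto
qed

end
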